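(* For all integers $L\ge 0$ and $n\ge 1$, $$S_L(n+1,n)=\frac{n(n+1)}{2}\left[\frac{(n+1)!}{2}\right]^{L}=\left[\frac{(n+1)!}{2}\right]^{L}S_0(n+1,n).$$
   Context: For an integer $L\ge 0$ let ${}_0F_L(z)=\sum_{n=0}^{\infty}\frac{z^n}{(n!)^{L+1}}$. Define the numbers $S_L(n,l)$ ($n,l\ge 0$) by the formal power series identities $\frac{({}_0F_L(z)-1)^l}{l!}=\sum_{n\ge l}\frac{S_L(n,l)}{(n!)^{L+1}}z^n$ for each $l\ge 0$. In particular $S_0(n,l)$ are the Stirling numbers of the second kind. *)

theory Defs
  imports "HOL-Computational_Algebra.Formal_Power_Series"
begin

definition hyp0F :: "nat \<Rightarrow> real fps" where
  "hyp0F L = Abs_fps (\<lambda>n. 1 / (fact n) ^ (L + 1))"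

definition S_L :: "nat \<Rightarrow> nat \<Rightarrow> nat \<Rightarrow> real" where
  "S_L L n l = (fact n) ^ (L + 1) *
     fps_nth (fps_const (1 / fact l) * (hyp0F L - 1) ^ l) n"

end

theory Submission
  imports Defs
begin

unbundle fps_syntax

text \<open>Since \<open>0F_L(z) - 1 = z + z\<^sup>2 / 2\<^bsup>L+1\<^esup> + \<dots>\<close>, the coefficient of \<open>z\<^bsup>n+1\<^esup>\<close> in its
  \<open>n\<close>-th power only sees the first two coefficients: it is \<open>n / 2\<^bsup>L+1\<^esup>\<close>.
  Multiplying by \<open>((n+1)!)\<^bsup>L+1\<^esup> / n!\<close> gives \<open>S_L(n+1,n) = n (n+1) / 2 \<cdot> ((n+1)!/2)\<^sup>L\<close>,
  and the case \<open>L = 0\<close> identifies the first factor with \<open>S_0(n+1,n)\<close>.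
  Both sides vanish for \<open>n = 0\<close>.\<close>

lemma fps_eq_fps_X_times_shift:
  fixes f :: "'a::comm_semiring_1 fps"
  assumes "f $ 0 = 0"
  shows "f = fps_X * fps_shift 1 f"
proof (rule fps_ext)
  fix k show "f $ k = (fps_X * fps_shift 1 f) $ k"
    using assms by (cases k) (simp_all add: fps_X_mult_nth)
qed

lemma fps_power_nth_Suc_self:
  fixes f :: "'a::comm_semiring_1 fps"
  assumes "f $ 0 = 0"
  shows "(f ^ n) $ Suc n = of_nat n * (f $ 1) ^ (n - 1) * f $ 2"
proof -
  have "(f ^ n) $ Suc n = (fps_X ^ n * fps_shift 1 f ^ n) $ Suc n"
    by (subst fps_eq_fps_X_times_shift[OF assms]) (simp add: power_mult_distrib)
  also have "\<dots> = (fps_shift 1 f ^ n) $ 1"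
    by (simp add: fps_X_power_mult_nth)
  also have "\<dots> = of_nat n * (f $ 1) ^ (n - 1) * f $ 2"
    unfolding fps_power_first by (simp add: numeral_2_eq_2)
  finally show ?thesis .
qed

lemma hyp0F_minus_one_power_nth_Suc_self:
  "((hyp0F L - 1) ^ n) $ Suc n = real n / 2 ^ (L + 1)"
  by (subst fps_power_nth_Suc_self) (simp_all add: hyp0F_def)

lemma S_L_Suc_self: "S_L L (n + 1) n = real (n * (n + 1)) / 2 * (fact (n + 1) / 2) ^ L"
proof -
  have fact_Suc_n: "(fact (n + 1) :: real) = (n + 1) * fact n"
    by (simp add: algebra_simps)
  have "S_L L (n + 1) n = fact (n + 1) ^ (L + 1) * (1 / fact n * (real n / 2 ^ (L + 1)))"
    using hyp0F_minus_one_power_nth_Suc_self[of L n] by (simp add: S_L_def del: fact_Suc)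
  also have "\<dots> = real (n * (n + 1)) / 2 * (fact (n + 1) / 2) ^ L"
    unfolding fact_Suc_n by (simp add: field_simps power_mult_distrib)
  finally show ?thesis .
qed

theorem mainTheorem4:
  fixes L n :: nat
  assumes "n \<ge> 1"
  shows "S_L L (n + 1) n = real (n * (n + 1)) / 2 * (fact (n + 1) / 2) ^ L
       \<and> S_L L (n + 1) n = (fact (n + 1) / 2) ^ L * S_L 0 (n + 1) n"
  unfolding S_L_Suc_self[of L n] S_L_Suc_self[of 0 n] by simp

end
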